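(* Let $\rho_X,\rho_Z\in(0,1/2)$ and let $C\sim\mathrm{CSS}_n(\rho_X,\rho_Z)$ be a random CSS code. There exists a constant $c_0>0$ such that with probability $1-2^{-\Omega(n)}$, there exists a decoder $\operatorname{Dec}_{C,Y}^Z$ that corrects all $Z$-errors $e$ of $C$ of $Y$-weight $|e|_Y\le c_0n/\log n$.
   Context: $\mathrm{CSS}_n(\rho_X,\rho_Z)$: choose $H_Z\in\mathbb{F}_2^{\rho_Zn\times n}$ uniformly at random, then $H_X\in\mathbb{F}_2^{\rho_Xn\times n}$ uniformly among matrices with $H_XH_Z^{\mathrm T}=0$; $C=(H_X,H_Z)$. Let $S_Z$ be the rows of $H_Z$; for $i\in[n]$, $Y_C^i$ is the set of vectors obtained from some $s\in S_Z$ by setting all entries of index greater than $i$ to zero, and $Y_C=\bigcup_iY_C^i$. The $Y$-weight $|w|_Y$ is the minimum size of a subset of $Y_C$ summing to $w$. A decoder maps a syndrome $\sigma\in\mathbb{F}_2^{\rho_Xn}$ to $\hat f\in\mathbb{F}_2^n$ with $H_X\hat f=\sigma$; it corrects $e$ if $e+\hat f\in\mathrm{row}(H_Z)$ when given $\sigma=H_Xe$. *)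

theory Defs
  imports "HOL-Probability.Probability" "HOL-Library.FuncSet"
begin

text \<open>Vectors in F_2^n are represented as subsets of {..<n} (their supports, 0-indexed);
  addition is symmetric difference. A matrix with m rows is a function from
  {..<m} to row vectors (extensional outside {..<m}).\<close>

definition vadd :: "nat set \<Rightarrow> nat set \<Rightarrow> nat set" where
  "vadd a b = (a - b) \<union> (b - a)"

definition xsum :: "'a set \<Rightarrow> ('a \<Rightarrow> nat set) \<Rightarrow> nat set" where
  "xsum A f = {j. odd (card {a \<in> A. j \<in> f a})}"

definition mats :: "nat \<Rightarrow> nat \<Rightarrow> (nat \<Rightarrow> nat set) set" where
  "mats m n = {..<m} \<rightarrow>\<^sub>E Pow {..<n}"

definition orth :: "nat set \<Rightarrow> nat set \<Rightarrow> bool" where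
  "orth a b = even (card (a \<inter> b))"

definition compat :: "nat \<Rightarrow> nat \<Rightarrow> (nat \<Rightarrow> nat set) \<Rightarrow> (nat \<Rightarrow> nat set) \<Rightarrow> bool" where
  "compat mX mZ HX HZ = (\<forall>i<mX. \<forall>j<mZ. orth (HX i) (HZ j))"

definition nrows :: "real \<Rightarrow> nat \<Rightarrow> nat" where
  "nrows \<rho> n = nat \<lfloor>\<rho> * real n\<rfloor>"

definition CSS :: "nat \<Rightarrow> real \<Rightarrow> real \<Rightarrow> ((nat \<Rightarrow> nat set) \<times> (nat \<Rightarrow> nat set)) pmf" where
  "CSS n \<rho>X \<rho>Z =
     do { HZ \<leftarrow> pmf_of_set (mats (nrows \<rho>Z n) n);
          HX \<leftarrow> pmf_of_set {HX \<in> mats (nrows \<rho>X n) n. compat (nrows \<rho>X n) (nrows \<rho>Z n) HX HZ};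
          return_pmf (HX, HZ) }"

definition syndrome :: "nat \<Rightarrow> (nat \<Rightarrow> nat set) \<Rightarrow> nat set \<Rightarrow> nat set" where
  "syndrome mX HX e = {i. i < mX \<and> odd (card (HX i \<inter> e))}"

definition rowspace :: "nat \<Rightarrow> (nat \<Rightarrow> nat set) \<Rightarrow> nat set set" where
  "rowspace mZ HZ = {xsum S HZ | S. S \<subseteq> {..<mZ}}"

text \<open>Y_C = union over i in [n] of truncations of rows of H_Z to the first i coordinates
  (0-indexed coordinates < i).\<close>
definition Yset :: "nat \<Rightarrow> nat \<Rightarrow> (nat \<Rightarrow> nat set) \<Rightarrow> nat set set" where
  "Yset n mZ HZ = {HZ j \<inter> {..<i} | j i. j < mZ \<and> 1 \<le> i \<and> i \<le> n}"

text \<open>Y-weight: minimum size of a subset of Y_C summing to w (infinity if none).\<close>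
definition Yweight :: "nat \<Rightarrow> nat \<Rightarrow> (nat \<Rightarrow> nat set) \<Rightarrow> nat set \<Rightarrow> enat" where
  "Yweight n mZ HZ w =
     (INF T \<in> {T. T \<subseteq> Yset n mZ HZ \<and> finite T \<and> xsum T id = w}. enat (card T))"

definition is_decoder :: "nat \<Rightarrow> nat \<Rightarrow> (nat \<Rightarrow> nat set) \<Rightarrow> (nat set \<Rightarrow> nat set) \<Rightarrow> bool" where
  "is_decoder n mX HX Dec =
     (\<forall>e \<subseteq> {..<n}. Dec (syndrome mX HX e) \<subseteq> {..<n} \<and>
        syndrome mX HX (Dec (syndrome mX HX e)) = syndrome mX HX e)"

definition corrects :: "nat \<Rightarrow> nat \<Rightarrow> (nat \<Rightarrow> nat set) \<Rightarrow> (nat \<Rightarrow> nat set) \<Rightarrow> (nat set \<Rightarrow> nat set) \<Rightarrow> nat set \<Rightarrow> bool" where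
  "corrects mX mZ HX HZ Dec e = (vadd e (Dec (syndrome mX HX e)) \<in> rowspace mZ HZ)"

end

theory Submission
  imports Defs
begin

text \<open>Fix \<open>H_Z\<close>. The rows of \<open>H_X\<close> are then independent uniform vectors of the orthogonal
  complement \<open>D\<close> of \<open>row(H_Z)\<close>. A vector \<open>w\<close> outside \<open>row(H_Z)\<close> is orthogonal to exactly
  half of \<open>D\<close>, so all rows of \<open>H_X\<close> are orthogonal to \<open>w\<close> with probability \<open>2^(-m_X)\<close>.
  There are at most \<open>1 + (m_Z n)^K\<close> vectors of \<open>Y\<close>-weight at most \<open>K\<close>, and for
  \<open>K = \<rho>_X n / (8 log n)\<close> the square of this number is at most \<open>2^(\<rho>_X n / 2 + 2)\<close>.
  A union bound over pairs of such vectors shows that, with probability \<open>1 - 2^(-\<rho>_X n / 4)\<close>,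
  any two of them with the same syndrome differ by a stabilizer. Then the decoder that returns
  a vector of \<open>Y\<close>-weight at most \<open>K\<close> with the given syndrome, whenever there is one, corrects
  every such error.\<close>

lemma card_Int_vadd:
  assumes "finite (r \<inter> a)" "finite (r \<inter> b)"
  shows "card (r \<inter> vadd a b) + 2 * card (r \<inter> a \<inter> b) = card (r \<inter> a) + card (r \<inter> b)"
proof -
  have split: "r \<inter> vadd a b = (r \<inter> a \<union> r \<inter> b) - (r \<inter> a \<inter> (r \<inter> b))"
    by (auto simp: vadd_def)
  have "card (r \<inter> vadd a b) = card (r \<inter> a \<union> r \<inter> b) - card (r \<inter> a \<inter> (r \<inter> b))"
    unfolding split using assms by (intro card_Diff_subset) auto
  moreover have "card (r \<inter> a \<inter> (r \<inter> b)) \<le> card (r \<inter> a \<union> r \<inter> b)"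
    using assms by (intro card_mono) auto
  moreover have "card (r \<inter> a) + card (r \<inter> b) = card (r \<inter> a \<union> r \<inter> b) + card (r \<inter> a \<inter> (r \<inter> b))"
    using assms by (rule card_Un_Int)
  moreover have "r \<inter> a \<inter> (r \<inter> b) = r \<inter> a \<inter> b" by auto
  ultimately show ?thesis by simp
qed

lemma orth_commute: "orth a b = orth b a"
  unfolding orth_def by (simp add: Int_commute)

lemma orth_vadd_right: "finite r \<Longrightarrow> orth r (vadd a b) \<longleftrightarrow> (orth r a \<longleftrightarrow> orth r b)"
  unfolding orth_def using card_Int_vadd[of r a b] by simp presburger

lemma orth_vadd_left: "finite a \<Longrightarrow> finite b \<Longrightarrow> orth (vadd a b) c \<longleftrightarrow> (orth a c \<longleftrightarrow> orth b c)"
  unfolding orth_def using card_Int_vadd[of c a b] by (simp add: Int_commute) presburger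

lemma vadd_commute: "vadd a b = vadd b a"
  unfolding vadd_def by auto

lemma vadd_vadd_cancel: "vadd (vadd a b) b = a"
  unfolding vadd_def by auto

lemma vadd_subset: "a \<subseteq> X \<Longrightarrow> b \<subseteq> X \<Longrightarrow> vadd a b \<subseteq> X"
  unfolding vadd_def by auto

lemma xsum_empty [simp]: "xsum {} f = {}"
  unfolding xsum_def by simp

lemma xsum_insert:
  assumes "finite S" "a \<notin> S"
  shows "xsum (insert a S) f = vadd (f a) (xsum S f)"
proof -
  have "card {x \<in> insert a S. j \<in> f x} = card {x \<in> S. j \<in> f x} + (if j \<in> f a then 1 else 0)" for j
  proof -
    have "{x \<in> insert a S. j \<in> f x} = (if j \<in> f a then insert a {x \<in> S. j \<in> f x} else {x \<in> S. j \<in> f x})"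
      by auto
    then show ?thesis using assms by simp
  qed
  then show ?thesis unfolding xsum_def vadd_def by auto
qed

lemma xsum_id_subset: "T \<subseteq> Pow X \<Longrightarrow> xsum T id \<subseteq> X"
  unfolding xsum_def by (fastforce dest!: odd_pos simp: card_gt_0_iff)

lemma rowspace_Suc: "rowspace (Suc m) H = rowspace m H \<union> vadd (H m) ` rowspace m H"
proof (intro equalityI subsetI)
  fix w assume "w \<in> rowspace (Suc m) H"
  then obtain S where S: "S \<subseteq> {..<Suc m}" "w = xsum S H"
    unfolding rowspace_def by blast
  show "w \<in> rowspace m H \<union> vadd (H m) ` rowspace m H"
  proof (cases "m \<in> S")
    case True
    have "S - {m} \<subseteq> {..<m}" "finite (S - {m})" using S(1) by (auto intro: finite_subset)
    moreover have "w = vadd (H m) (xsum (S - {m}) H)"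
      using S(2) True xsum_insert[of "S - {m}" m H] \<open>finite (S - {m})\<close> by (simp add: insert_absorb)
    ultimately show ?thesis unfolding rowspace_def by blast
  next
    case False
    then have "S \<subseteq> {..<m}" using S(1) by (auto simp: less_Suc_eq)
    then show ?thesis using S(2) unfolding rowspace_def by blast
  qed
next
  fix w assume "w \<in> rowspace m H \<union> vadd (H m) ` rowspace m H"
  then obtain S where S: "S \<subseteq> {..<m}" "w = xsum S H \<or> w = vadd (H m) (xsum S H)"
    unfolding rowspace_def by blast
  have "finite S" using S(1) by (rule finite_subset) simp
  then have "w = xsum S H \<or> w = xsum (insert m S) H"
    using S xsum_insert[of S m H] by auto
  moreover have "S \<subseteq> {..<Suc m}" "insert m S \<subseteq> {..<Suc m}" using S(1) by auto
  ultimately show "w \<in> rowspace (Suc m) H" unfolding rowspace_def by blast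
qed

definition perp_rows :: "nat \<Rightarrow> nat \<Rightarrow> (nat \<Rightarrow> nat set) \<Rightarrow> nat set set" where
  "perp_rows n m H = {r. r \<subseteq> {..<n} \<and> (\<forall>j<m. orth r (H j))}"

lemma perp_rows_Suc: "perp_rows n (Suc m) H = {r \<in> perp_rows n m H. orth r (H m)}"
  unfolding perp_rows_def by (auto simp: less_Suc_eq)

lemma finite_perp_rows: "finite (perp_rows n m H)"
  unfolding perp_rows_def by (rule finite_subset[of _ "Pow {..<n}"]) auto

lemma empty_in_perp_rows: "{} \<in> perp_rows n m H"
  unfolding perp_rows_def orth_def by simp

lemma perp_rows_nonempty: "perp_rows n m H \<noteq> {}"
  using empty_in_perp_rows by blast

lemma vadd_in_perp_rows:
  assumes "r \<in> perp_rows n m H" "s \<in> perp_rows n m H"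
  shows "vadd r s \<in> perp_rows n m H"
proof -
  have "finite r" "finite s" using assms unfolding perp_rows_def by (auto intro: finite_subset)
  then show ?thesis using assms unfolding perp_rows_def by (simp add: orth_vadd_left vadd_subset)
qed

text \<open>The double-annihilator property of the row space over \<open>F\<^sub>2\<close>.\<close>

lemma perp_rows_not_orth:
  assumes "\<forall>j<m. H j \<subseteq> {..<n}" "w \<subseteq> {..<n}" "w \<notin> rowspace m H"
  shows "\<exists>r \<in> perp_rows n m H. \<not> orth r w"
  using assms
proof (induction m arbitrary: w)
  case 0
  have "rowspace 0 H = {{}}" unfolding rowspace_def by auto
  then obtain x where "x \<in> w" using "0.prems"(3) by auto
  then have "{x} \<in> perp_rows n 0 H" "\<not> orth {x} w"
    using "0.prems"(2) unfolding perp_rows_def orth_def by auto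
  then show ?case by blast
next
  case (Suc m)
  let ?w' = "vadd w (H m)"
  have "w = vadd (H m) ?w'" by (metis vadd_commute vadd_vadd_cancel)
  then have "w \<notin> rowspace m H" "?w' \<notin> rowspace m H"
    using Suc.prems(3) unfolding rowspace_Suc by auto
  moreover have "?w' \<subseteq> {..<n}" using Suc.prems(1,2) by (intro vadd_subset) auto
  ultimately obtain r1 r2 where
    r1: "r1 \<in> perp_rows n m H" "\<not> orth r1 w" and r2: "r2 \<in> perp_rows n m H" "\<not> orth r2 ?w'"
    using Suc.IH Suc.prems(1,2) by (metis less_SucI)
  have "finite r1" "finite r2" using r1(1) r2(1) unfolding perp_rows_def by (auto intro: finite_subset)
  then have r2w: "\<not> orth r2 w \<longleftrightarrow> orth r2 (H m)"
    and sum: "orth (vadd r1 r2) c \<longleftrightarrow> (orth r1 c \<longleftrightarrow> orth r2 c)" for c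
    using r2(2) by (auto simp: orth_vadd_right orth_vadd_left)
  consider "orth r1 (H m)" | "orth r2 (H m)" | "\<not> orth r1 (H m)" "\<not> orth r2 (H m)" by blast
  then show ?case
  proof cases
    case 1 then show ?thesis using r1 unfolding perp_rows_Suc by blast
  next
    case 2 then show ?thesis using r2(1) r2w unfolding perp_rows_Suc by blast
  next
    case 3
    then have "vadd r1 r2 \<in> perp_rows n (Suc m) H" "\<not> orth (vadd r1 r2) w"
      using vadd_in_perp_rows[OF r1(1) r2(1)] r1(2) r2w sum unfolding perp_rows_Suc by auto
    then show ?thesis by blast
  qed
qed

text \<open>Translation by a vector of the complement that is not orthogonal to \<open>w\<close> swaps the
  two halves.\<close>

lemma card_perp_rows_orth:
  assumes "\<forall>j<m. H j \<subseteq> {..<n}" "w \<subseteq> {..<n}" "w \<notin> rowspace m H"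
  shows "card (perp_rows n m H) = 2 * card {r \<in> perp_rows n m H. orth r w}"
proof -
  let ?D = "perp_rows n m H"
  obtain r0 where r0: "r0 \<in> ?D" "\<not> orth r0 w" using perp_rows_not_orth[OF assms] by blast
  have "finite w" using assms(2) by (rule finite_subset) simp
  then have flip: "orth (vadd r r0) w \<longleftrightarrow> \<not> orth r w" for r
    using r0(2) by (simp add: orth_commute[of _ w] orth_vadd_right)
  have "bij_betw (\<lambda>r. vadd r r0) {r \<in> ?D. orth r w} {r \<in> ?D. \<not> orth r w}"
    by (rule bij_betw_byWitness[where f' = "\<lambda>r. vadd r r0"])
       (auto simp: vadd_vadd_cancel flip intro: vadd_in_perp_rows[OF _ r0(1)])
  then have "card {r \<in> ?D. orth r w} = card {r \<in> ?D. \<not> orth r w}"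
    by (rule bij_betw_same_card)
  moreover have "card ?D = card {r \<in> ?D. orth r w} + card {r \<in> ?D. \<not> orth r w}"
    using finite_perp_rows by (subst card_Un_disjoint[symmetric]) (auto intro: arg_cong[where f = card])
  ultimately show ?thesis by simp
qed

lemma finite_mats: "finite (mats m n)"
  unfolding mats_def by (intro finite_PiE) auto

lemma mats_nonempty: "mats m n \<noteq> {}"
  unfolding mats_def PiE_eq_empty_iff by (metis Pow_bottom empty_iff)

lemma compatible_eq_PiE:
  "{HX \<in> mats mX n. compat mX mZ HX HZ} = {..<mX} \<rightarrow>\<^sub>E perp_rows n mZ HZ"
  unfolding mats_def compat_def perp_rows_def by (intro set_eqI) (simp add: PiE_iff Pow_def, blast)

lemma prob_compatible_rows_orth:
  assumes "HZ \<in> mats mZ n" "w \<subseteq> {..<n}" "w \<notin> rowspace mZ HZ"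
  shows "measure_pmf.prob (pmf_of_set {HX \<in> mats mX n. compat mX mZ HX HZ})
           {HX. \<forall>i<mX. orth (HX i) w} = 1 / 2 ^ mX"
proof -
  let ?D = "perp_rows n mZ HZ"
  have rows: "\<forall>j<mZ. HZ j \<subseteq> {..<n}" using assms(1) unfolding mats_def by auto
  have "card ?D > 0" using finite_perp_rows perp_rows_nonempty by (simp add: card_gt_0_iff)
  moreover have "({..<mX} \<rightarrow>\<^sub>E ?D) \<inter> {HX. \<forall>i<mX. orth (HX i) w} = {..<mX} \<rightarrow>\<^sub>E {r \<in> ?D. orth r w}"
    by (auto simp: PiE_iff)
  moreover have "{..<mX} \<rightarrow>\<^sub>E ?D \<noteq> {}" "finite ({..<mX} \<rightarrow>\<^sub>E ?D)"
    using perp_rows_nonempty finite_perp_rows by (auto simp: PiE_eq_empty_iff intro: finite_PiE)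
  ultimately show ?thesis
    unfolding compatible_eq_PiE using card_perp_rows_orth[OF rows assms(2,3)]
    by (simp add: measure_pmf_of_set card_PiE power_divide)
qed

lemma syndrome_eq_imp_orth_vadd:
  assumes "syndrome mX HX a = syndrome mX HX b" "i < mX" "finite (HX i)"
  shows "orth (HX i) (vadd a b)"
proof -
  have "odd (card (HX i \<inter> a)) \<longleftrightarrow> odd (card (HX i \<inter> b))"
    using assms(1,2) unfolding syndrome_def set_eq_iff by blast
  then show ?thesis using orth_vadd_right[OF assms(3), of a b] by (simp add: orth_def)
qed

definition syndrome_inj_mod_rowspace ::
    "nat \<Rightarrow> (nat \<Rightarrow> nat set) \<Rightarrow> nat \<Rightarrow> (nat \<Rightarrow> nat set) \<Rightarrow> nat set set \<Rightarrow> bool" where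
  "syndrome_inj_mod_rowspace mX HX mZ HZ G \<longleftrightarrow>
     (\<forall>a\<in>G. \<forall>b\<in>G. syndrome mX HX a = syndrome mX HX b \<longrightarrow> vadd a b \<in> rowspace mZ HZ)"

text \<open>Union bound over the pairs of \<open>G\<close> whose difference is not a stabilizer.\<close>

lemma prob_syndrome_inj_mod_rowspace:
  assumes "HZ \<in> mats mZ n" "G \<subseteq> Pow {..<n}" "finite G"
  shows "1 - real (card G) ^ 2 / 2 ^ mX \<le>
    measure_pmf.prob (pmf_of_set {HX \<in> mats mX n. compat mX mZ HX HZ})
      {HX. syndrome_inj_mod_rowspace mX HX mZ HZ G}"
proof -
  let ?C = "{HX \<in> mats mX n. compat mX mZ HX HZ}"
  let ?M = "pmf_of_set ?C"
  let ?good = "{HX. syndrome_inj_mod_rowspace mX HX mZ HZ G}"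
  let ?P = "{p \<in> G \<times> G. vadd (fst p) (snd p) \<notin> rowspace mZ HZ}"
  let ?bad = "\<lambda>p. {HX. \<forall>i<mX. orth (HX i) (vadd (fst p) (snd p))}"
  have "?C \<noteq> {}" unfolding compatible_eq_PiE by (simp add: PiE_eq_empty_iff perp_rows_nonempty)
  moreover have "finite ?C" using finite_mats[of mX n] by simp
  ultimately have set_M: "set_pmf ?M = ?C" by simp
  have bad_cover: "(UNIV - ?good) \<inter> set_pmf ?M \<subseteq> \<Union> (?bad ` ?P)"
  proof
    fix HX assume "HX \<in> (UNIV - ?good) \<inter> set_pmf ?M"
    then obtain a b where ab: "(a, b) \<in> ?P" "syndrome mX HX a = syndrome mX HX b"
      and "HX \<in> mats mX n" unfolding syndrome_inj_mod_rowspace_def set_M by auto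
    then have "finite (HX i)" if "i < mX" for i
      using that unfolding mats_def by (auto intro: finite_subset)
    then have "HX \<in> ?bad (a, b)" using ab(2) syndrome_eq_imp_orth_vadd by simp
    then show "HX \<in> \<Union> (?bad ` ?P)" using ab(1) by blast
  qed
  have prob_bad: "measure_pmf.prob ?M (?bad p) = 1 / 2 ^ mX" if "p \<in> ?P" for p
  proof -
    have "fst p \<in> G" "snd p \<in> G" using that by auto
    then have "fst p \<subseteq> {..<n}" "snd p \<subseteq> {..<n}" using assms(2) by auto
    then show ?thesis using that by (intro prob_compatible_rows_orth[OF assms(1)] vadd_subset) auto
  qed
  have "measure_pmf.prob ?M (UNIV - ?good) = measure_pmf.prob ?M ((UNIV - ?good) \<inter> set_pmf ?M)"
    by (rule measure_Int_set_pmf[symmetric])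
  also have "\<dots> \<le> measure_pmf.prob ?M (\<Union> (?bad ` ?P))"
    using bad_cover by (rule measure_pmf.finite_measure_mono) simp
  also have "\<dots> \<le> (\<Sum>p\<in>?P. measure_pmf.prob ?M (?bad p))"
    using assms(3) by (intro measure_pmf.finite_measure_subadditive_finite) simp_all
  also have "\<dots> = real (card ?P) / 2 ^ mX"
    using prob_bad by simp
  also have "\<dots> \<le> real (card G) ^ 2 / 2 ^ mX"
  proof -
    have "card ?P \<le> card (G \<times> G)" using assms(3) by (intro card_mono) auto
    then have "real (card ?P) \<le> real (card G) ^ 2"
      by (simp add: card_cartesian_product power2_eq_square flip: of_nat_mult)
    then show ?thesis by (simp add: divide_right_mono)
  qed
  finally show ?thesis
    using measure_pmf.prob_compl[of ?good ?M] by simp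
qed

lemma decoder_if_syndrome_inj_mod_rowspace:
  assumes "syndrome_inj_mod_rowspace mX HX mZ HZ G"
  shows "\<exists>Dec. is_decoder n mX HX Dec \<and> (\<forall>e\<in>G. e \<subseteq> {..<n} \<longrightarrow> corrects mX mZ HX HZ Dec e)"
proof -
  \<comment> \<open>The second disjunct only guarantees a choice when no vector of \<open>G\<close> has syndrome \<open>\<sigma>\<close>.\<close>
  define Dec where "Dec \<sigma> = (SOME g. g \<subseteq> {..<n} \<and> syndrome mX HX g = \<sigma> \<and>
    (g \<in> G \<or> (\<forall>g'\<in>G. g' \<subseteq> {..<n} \<longrightarrow> syndrome mX HX g' \<noteq> \<sigma>)))" for \<sigma>
  have Dec: "Dec (syndrome mX HX e) \<subseteq> {..<n} \<and> syndrome mX HX (Dec (syndrome mX HX e)) = syndrome mX HX e \<and>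
      (Dec (syndrome mX HX e) \<in> G \<or> (\<forall>g'\<in>G. g' \<subseteq> {..<n} \<longrightarrow> syndrome mX HX g' \<noteq> syndrome mX HX e))"
    if "e \<subseteq> {..<n}" for e
    unfolding Dec_def by (rule someI_ex) (use that in blast)
  then have "is_decoder n mX HX Dec" unfolding is_decoder_def by blast
  moreover have "corrects mX mZ HX HZ Dec e" if "e \<in> G" "e \<subseteq> {..<n}" for e
    using assms Dec[OF that(2)] that unfolding syndrome_inj_mod_rowspace_def corrects_def by blast
  ultimately show ?thesis by blast
qed

lemma measure_bind_pmf_ge:
  assumes "\<And>x. x \<in> set_pmf M \<Longrightarrow> c \<le> measure_pmf.prob (f x) A"
  shows "c \<le> measure_pmf.prob (bind_pmf M f) A"
proof (cases "c \<ge> 0")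
  case True
  have "ennreal c \<le> (\<integral>\<^sup>+x. emeasure (f x) A \<partial>M)"
    using assms by (intro measure_pmf.nn_integral_ge_const)
      (auto simp: AE_measure_pmf_iff measure_pmf.emeasure_eq_measure)
  then have "ennreal c \<le> emeasure (bind_pmf M f) A" by simp
  then show ?thesis using True by (simp add: measure_pmf.emeasure_eq_measure)
qed (use measure_nonneg[of "measure_pmf (bind_pmf M f)" A] in linarith)

lemma prob_CSS_syndrome_inj_mod_rowspace:
  assumes "\<And>HZ. HZ \<in> mats (nrows \<rho>Z n) n \<Longrightarrow> G HZ \<subseteq> Pow {..<n} \<and> finite (G HZ) \<and> card (G HZ) \<le> B"
  shows "1 - real B ^ 2 / 2 ^ nrows \<rho>X n \<le> measure_pmf.prob (CSS n \<rho>X \<rho>Z)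
    {(HX, HZ). syndrome_inj_mod_rowspace (nrows \<rho>X n) HX (nrows \<rho>Z n) HZ (G HZ)}"
proof -
  let ?mX = "nrows \<rho>X n" and ?mZ = "nrows \<rho>Z n"
  let ?S = "{(HX, HZ). syndrome_inj_mod_rowspace ?mX HX ?mZ HZ (G HZ)}"
  have "1 - real B ^ 2 / 2 ^ ?mX \<le> measure_pmf.prob
      (pmf_of_set {HX \<in> mats ?mX n. compat ?mX ?mZ HX HZ} \<bind> (\<lambda>HX. return_pmf (HX, HZ))) ?S"
    if "HZ \<in> set_pmf (pmf_of_set (mats ?mZ n))" for HZ
  proof -
    have HZ: "HZ \<in> mats ?mZ n" using that finite_mats mats_nonempty by simp
    have "1 - real B ^ 2 / 2 ^ ?mX \<le> 1 - real (card (G HZ)) ^ 2 / 2 ^ ?mX"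
      using assms[OF HZ] by (simp add: divide_right_mono power_mono)
    also have "\<dots> \<le> measure_pmf.prob (pmf_of_set {HX \<in> mats ?mX n. compat ?mX ?mZ HX HZ})
        {HX. syndrome_inj_mod_rowspace ?mX HX ?mZ HZ (G HZ)}"
      using assms[OF HZ] by (intro prob_syndrome_inj_mod_rowspace[OF HZ]) auto
    finally show ?thesis by (simp add: map_pmf_def[symmetric] vimage_def)
  qed
  then show ?thesis unfolding CSS_def by (rule measure_bind_pmf_ge)
qed

lemma card_subsets_card_le:
  assumes "finite Y"
  shows "card {T. T \<subseteq> Y \<and> card T \<le> K} \<le> 1 + card Y ^ K"
proof -
  let ?L = "{xs. set xs \<subseteq> Y \<and> length xs = K}"
  have "{T. T \<subseteq> Y \<and> card T \<le> K} \<subseteq> insert {} (set ` ?L)"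
  proof
    fix T assume T: "T \<in> {T. T \<subseteq> Y \<and> card T \<le> K}"
    show "T \<in> insert {} (set ` ?L)"
    proof (cases "T = {}")
      case False
      have "finite T" using T assms finite_subset by blast
      then obtain xs where xs: "set xs = T" "distinct xs" using finite_distinct_list by blast
      then have "length xs \<le> K" "xs \<noteq> []" using T False distinct_card by fastforce+
      then have "set (xs @ replicate (K - length xs) (hd xs)) = T"
        "length (xs @ replicate (K - length xs) (hd xs)) = K"
        using xs(1) by auto
      then show ?thesis using T by blast
    qed simp
  qed
  then have "card {T. T \<subseteq> Y \<and> card T \<le> K} \<le> card (insert {} (set ` ?L))"
    by (rule card_mono[rotated]) (simp add: finite_lists_length_eq[OF assms])
  also have "\<dots> \<le> 1 + card (set ` ?L)"
    using finite_lists_length_eq[OF assms, of K] by (simp add: card_insert_if)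
  also have "\<dots> \<le> 1 + card ?L"
    using card_image_le[OF finite_lists_length_eq[OF assms]] by simp
  also have "\<dots> = 1 + card Y ^ K" by (simp add: card_lists_length_eq[OF assms])
  finally show ?thesis .
qed

lemma Yset_eq_image: "Yset n mZ HZ = (\<lambda>(j, i). HZ j \<inter> {..<i}) ` ({..<mZ} \<times> {1..n})"
  unfolding Yset_def by force

lemma finite_Yset: "finite (Yset n mZ HZ)"
  unfolding Yset_eq_image by simp

lemma card_Yset_le: "card (Yset n mZ HZ) \<le> mZ * n"
  unfolding Yset_eq_image by (rule card_image_le[THEN order_trans]) simp_all

definition Yball :: "nat \<Rightarrow> nat \<Rightarrow> (nat \<Rightarrow> nat set) \<Rightarrow> nat \<Rightarrow> nat set set" where
  "Yball n mZ HZ K = (\<lambda>T. xsum T id) ` {T. T \<subseteq> Yset n mZ HZ \<and> card T \<le> K}"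

lemma finite_Yball: "finite (Yball n mZ HZ K)"
  unfolding Yball_def using finite_Yset by simp

lemma card_Yball_le: "card (Yball n mZ HZ K) \<le> 1 + (mZ * n) ^ K"
proof -
  have "card (Yball n mZ HZ K) \<le> card {T. T \<subseteq> Yset n mZ HZ \<and> card T \<le> K}"
    unfolding Yball_def by (rule card_image_le) (simp add: finite_Yset)
  also have "\<dots> \<le> 1 + card (Yset n mZ HZ) ^ K" by (rule card_subsets_card_le[OF finite_Yset])
  also have "\<dots> \<le> 1 + (mZ * n) ^ K" by (simp add: card_Yset_le power_mono)
  finally show ?thesis .
qed

lemma Yset_subset_Pow: "HZ \<in> mats mZ n \<Longrightarrow> Yset n mZ HZ \<subseteq> Pow {..<n}"
  unfolding Yset_def mats_def by (auto simp: PiE_iff)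

lemma Yball_subset_Pow:
  assumes "HZ \<in> mats mZ n"
  shows "Yball n mZ HZ K \<subseteq> Pow {..<n}"
proof
  fix e assume "e \<in> Yball n mZ HZ K"
  then obtain T where "T \<subseteq> Yset n mZ HZ" "e = xsum T id" unfolding Yball_def by blast
  then show "e \<in> Pow {..<n}" using Yset_subset_Pow[OF assms] xsum_id_subset by (metis PowI subset_trans)
qed

lemma in_Yball_if_Yweight_le:
  assumes "Yweight n mZ HZ e = enat k" "k \<le> K"
  shows "e \<in> Yball n mZ HZ K"
proof -
  let ?W = "(\<lambda>T. enat (card T)) ` {T. T \<subseteq> Yset n mZ HZ \<and> finite T \<and> xsum T id = e}"
  have W: "Inf ?W = enat k" using assms(1) unfolding Yweight_def .
  have "?W \<noteq> {}"
  proof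
    assume "?W = {}"
    then have "Inf ?W = \<infinity>" by (simp only: Inf_empty top_enat_def)
    then show False using W by simp
  qed
  then obtain w where "w \<in> ?W" by blast
  then have "Inf ?W \<in> ?W" by (rule wellorder_InfI)
  then obtain T where "T \<subseteq> Yset n mZ HZ" "xsum T id = e" "card T = k"
    unfolding W by auto
  then show ?thesis using assms(2) unfolding Yball_def by blast
qed

lemma card_bound_le_powr:
  fixes \<rho>X \<rho>Z :: real
  assumes "0 < \<rho>X" "\<rho>Z \<le> 1" "2 \<le> n"
  defines "K \<equiv> nat \<lfloor>\<rho>X / 8 * n / log 2 n\<rfloor>"
  shows "real (1 + (nrows \<rho>Z n * n) ^ K) \<le> 2 powr (\<rho>X / 4 * n + 1)"
proof -
  let ?L = "log 2 (real n)"
  have L: "?L > 0" using assms(3) by simp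
  have "real K \<le> \<rho>X / 8 * n / ?L" unfolding K_def using assms(1) L by (simp add: of_nat_nat)
  then have KL: "?L * (2 * real K) \<le> \<rho>X / 4 * n" using L by (simp add: field_simps)
  have "nrows \<rho>Z n \<le> n"
    unfolding nrows_def using mult_right_mono[OF assms(2), of "real n"] by (simp add: nat_le_iff) linarith
  then have "(nrows \<rho>Z n * n) ^ K \<le> (n * n) ^ K" by (intro power_mono) simp_all
  also have "\<dots> = n ^ (2 * K)" by (simp add: power_mult power2_eq_square)
  finally have "real ((nrows \<rho>Z n * n) ^ K) \<le> real n ^ (2 * K)" by (metis of_nat_le_iff of_nat_power)
  also have "\<dots> = (2 powr ?L) powr real (2 * K)" using powr_realpow[of "real n" "2 * K"] assms(3) by simp
  also have "\<dots> = 2 powr (?L * (2 * real K))" by (simp add: powr_powr)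
  also have "\<dots> \<le> 2 powr (\<rho>X / 4 * n)" using KL by simp
  finally show ?thesis
    using ge_one_powr_ge_zero[of 2 "\<rho>X / 4 * n"] assms(1) by (simp add: powr_add)
qed

lemma CSS_failure_bound_le:
  fixes \<rho>X \<rho>Z :: real
  assumes "0 < \<rho>X" "\<rho>Z \<le> 1" "2 \<le> n" "12 \<le> \<rho>X * n"
  defines "K \<equiv> nat \<lfloor>\<rho>X / 8 * n / log 2 n\<rfloor>"
  shows "real (1 + (nrows \<rho>Z n * n) ^ K) ^ 2 / 2 ^ nrows \<rho>X n \<le> 2 powr (- (\<rho>X / 4) * n)"
proof -
  have "real (1 + (nrows \<rho>Z n * n) ^ K) ^ 2 \<le> (2 powr (\<rho>X / 4 * n + 1)) ^ 2"
    using card_bound_le_powr[OF assms(1-3)] unfolding K_def by (rule power_mono) simp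
  also have "\<dots> = 2 powr (\<rho>X / 2 * n + 2)"
    unfolding power2_eq_square powr_add[symmetric] by (simp add: algebra_simps)
  finally have num: "real (1 + (nrows \<rho>Z n * n) ^ K) ^ 2 \<le> 2 powr (\<rho>X / 2 * n + 2)" .
  have "2 powr (\<rho>X * n - 1) \<le> 2 powr real (nrows \<rho>X n)"
    unfolding nrows_def using assms(1) by (simp add: of_nat_nat)
  then have den: "2 powr (\<rho>X * n - 1) \<le> 2 ^ nrows \<rho>X n" by (simp add: powr_realpow)
  have "real (1 + (nrows \<rho>Z n * n) ^ K) ^ 2 / 2 ^ nrows \<rho>X n
      \<le> 2 powr (\<rho>X / 2 * n + 2) / 2 powr (\<rho>X * n - 1)"
    using num den by (intro frac_le) auto
  also have "\<dots> = 2 powr (3 - \<rho>X / 2 * n)" by (simp add: powr_diff[symmetric] algebra_simps)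
  also have "\<dots> \<le> 2 powr (- (\<rho>X / 4) * n)" using assms(4) by simp
  finally show ?thesis .
qed

lemma prob_CSS_corrects_Yweight_le:
  assumes "\<And>k::nat. real k \<le> B \<Longrightarrow> k \<le> K"
  shows "1 - real (1 + (nrows \<rho>Z n * n) ^ K) ^ 2 / 2 ^ nrows \<rho>X n \<le>
    measure_pmf.prob (CSS n \<rho>X \<rho>Z)
      {(HX, HZ). \<exists>Dec. is_decoder n (nrows \<rho>X n) HX Dec \<and>
          (\<forall>e \<subseteq> {..<n}. \<forall>k::nat. Yweight n (nrows \<rho>Z n) HZ e = enat k \<and> real k \<le> B \<longrightarrow>
             corrects (nrows \<rho>X n) (nrows \<rho>Z n) HX HZ Dec e)}"
    (is "_ \<le> measure_pmf.prob _ ?T")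
proof -
  let ?mX = "nrows \<rho>X n" and ?mZ = "nrows \<rho>Z n"
  let ?S = "{(HX, HZ). syndrome_inj_mod_rowspace ?mX HX ?mZ HZ (Yball n ?mZ HZ K)}"
  have "?S \<subseteq> ?T"
  proof clarify
    fix HX HZ assume "syndrome_inj_mod_rowspace ?mX HX ?mZ HZ (Yball n ?mZ HZ K)"
    then obtain Dec where Dec: "is_decoder n ?mX HX Dec"
      "\<forall>e\<in>Yball n ?mZ HZ K. e \<subseteq> {..<n} \<longrightarrow> corrects ?mX ?mZ HX HZ Dec e"
      using decoder_if_syndrome_inj_mod_rowspace by blast
    have "corrects ?mX ?mZ HX HZ Dec e"
      if "e \<subseteq> {..<n}" "Yweight n ?mZ HZ e = enat k" "real k \<le> B" for e k
      using Dec(2) in_Yball_if_Yweight_le[OF that(2) assms[OF that(3)]] that(1) by blast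
    then show "\<exists>Dec. is_decoder n ?mX HX Dec \<and> (\<forall>e \<subseteq> {..<n}. \<forall>k::nat.
        Yweight n ?mZ HZ e = enat k \<and> real k \<le> B \<longrightarrow> corrects ?mX ?mZ HX HZ Dec e)"
      using Dec(1) by blast
  qed
  have "1 - real (1 + (?mZ * n) ^ K) ^ 2 / 2 ^ ?mX \<le> measure_pmf.prob (CSS n \<rho>X \<rho>Z) ?S"
    using Yball_subset_Pow finite_Yball card_Yball_le by (intro prob_CSS_syndrome_inj_mod_rowspace) simp
  also have "\<dots> \<le> measure_pmf.prob (CSS n \<rho>X \<rho>Z) ?T"
    using \<open>?S \<subseteq> ?T\<close> by (rule measure_pmf.finite_measure_mono) simp
  finally show ?thesis .
qed

theorem lemma25:
  fixes \<rho>X \<rho>Z :: real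
  assumes "0 < \<rho>X" "\<rho>X < 1/2" "0 < \<rho>Z" "\<rho>Z < 1/2"
  shows "\<exists>c0 > 0. \<exists>c1 > 0. \<exists>N. \<forall>n \<ge> N.
    measure_pmf.prob (CSS n \<rho>X \<rho>Z)
      {(HX, HZ). \<exists>Dec. is_decoder n (nrows \<rho>X n) HX Dec \<and>
          (\<forall>e \<subseteq> {..<n}. \<forall>k::nat. Yweight n (nrows \<rho>Z n) HZ e = enat k \<and>
               real k \<le> c0 * real n / log 2 (real n) \<longrightarrow>
             corrects (nrows \<rho>X n) (nrows \<rho>Z n) HX HZ Dec e)}
    \<ge> 1 - 2 powr (- c1 * real n)"
proof -
  have bound: "1 - 2 powr (- (\<rho>X / 4) * n) \<le> measure_pmf.prob (CSS n \<rho>X \<rho>Z)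
      {(HX, HZ). \<exists>Dec. is_decoder n (nrows \<rho>X n) HX Dec \<and>
          (\<forall>e \<subseteq> {..<n}. \<forall>k::nat. Yweight n (nrows \<rho>Z n) HZ e = enat k \<and>
               real k \<le> \<rho>X / 8 * real n / log 2 (real n) \<longrightarrow>
             corrects (nrows \<rho>X n) (nrows \<rho>Z n) HX HZ Dec e)}"
    if n: "nat \<lceil>12 / \<rho>X\<rceil> + 2 \<le> n" for n
  proof -
    define K where "K = nat \<lfloor>\<rho>X / 8 * n / log 2 n\<rfloor>"
    have "12 / \<rho>X \<le> real n" using n by linarith
    then have "12 \<le> \<rho>X * n" using assms(1) by (simp add: field_simps)
    then have "1 - 2 powr (- (\<rho>X / 4) * n) \<le> 1 - real (1 + (nrows \<rho>Z n * n) ^ K) ^ 2 / 2 ^ nrows \<rho>X n"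
      using CSS_failure_bound_le[of \<rho>X \<rho>Z n] assms n unfolding K_def by simp
    moreover have "k \<le> K" if "real k \<le> \<rho>X / 8 * n / log 2 n" for k
      using that unfolding K_def by (simp add: le_nat_floor)
    ultimately show ?thesis by (blast intro: order_trans prob_CSS_corrects_Yweight_le)
  qed
  have "\<rho>X / 8 > 0" "\<rho>X / 4 > 0" using assms(1) by simp_all
  then show ?thesis using bound by blast
qed

end
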